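(* Let $L$ be a subspace of $\bigwedge^kV$, let $1\le i<j\le n$, and suppose $L$ is monomial with respect to $e_j$, i.e. $L=\big(L\cap\bigwedge^{k}V^{(j)}\big)\oplus\big(L\cap(e_{j}\wedge\bigwedge^{k-1}V^{(j)})\big)$. Then for each $x\in\bigwedge^{k-1}V^{(j)}$ with $e_j\wedge x\in N_{j\to i}L$, it also holds that $e_i\wedge x\in N_{j\to i}L$.
   Context: $\mathbb{F}$ is a field (assumed throughout the paper, for expository purposes, to have characteristic not $2$), $V$ is an $n$-dimensional $\mathbb{F}$-vector space with a fixed basis $e_1,\dots,e_n$, and $\bigwedge V$ its exterior algebra. For $j\in[n]$, $V^{(j)}$ is the span of $\{e_h:h\neq j\}$, and $\bigwedge V^{(j)}$ is viewed as a subalgebra of $\bigwedge V$. Slow shift: for distinct $i,j\in[n]$ and nonzero $m\in\bigwedge^kV$, write uniquely $m=x'+e_j\wedge y'$ with $x'\in\bigwedge^kV^{(j)}$, $y'\in\bigwedge^{k-1}V^{(j)}$, and set $N_{j\to i}m=x'+e_i\wedge y'$ if this is nonzero, and $N_{j\to i}m=e_j\wedge y'$ otherwise (the limit as $t\to0$ of the projective action of the linear map $e_j\mapsto e_i+te_j$ fixing the other $e_h$). For a subspace $L$ of $\bigwedge^kV$, $N_{j\to i}L$ is the span of $\{N_{j\to i}m:m\in L\setminus\{0\}\}$. *)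

theory Defs
  imports Main
begin

text \<open>Exterior algebra of V = F^n with basis e_1..e_n, in coordinates:
  an element is a coefficient function on subsets S of {1..n}, the coefficient
  of e_S = e_{s_1} wedge ... wedge e_{s_p} (s_1 < ... < s_p).\<close>

type_synonym 'a ext = "nat set \<Rightarrow> 'a"

definition vzero :: "'a::field ext" where "vzero = (\<lambda>S. 0)"
definition vadd :: "'a::field ext \<Rightarrow> 'a ext \<Rightarrow> 'a ext" where
  "vadd x y = (\<lambda>S. x S + y S)"
definition vscale :: "'a::field \<Rightarrow> 'a ext \<Rightarrow> 'a ext" where
  "vscale c x = (\<lambda>S. c * x S)"

text \<open>The exterior algebra of V (all degrees), its k-th graded piece, and the
  k-th graded piece of the exterior algebra of V^(j) = span{e_h : h ~= j}.\<close>
definition Ext :: "nat \<Rightarrow> 'a::field ext set" where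
  "Ext n = {m. \<forall>S. m S \<noteq> 0 \<longrightarrow> S \<subseteq> {1..n}}"
definition Extk :: "nat \<Rightarrow> nat \<Rightarrow> 'a::field ext set" where
  "Extk n k = {m \<in> Ext n. \<forall>S. m S \<noteq> 0 \<longrightarrow> card S = k}"
definition Extkj :: "nat \<Rightarrow> nat \<Rightarrow> nat \<Rightarrow> 'a::field ext set" where
  "Extkj n k j = {m \<in> Extk n k. \<forall>S. m S \<noteq> 0 \<longrightarrow> j \<notin> S}"

text \<open>Sign of e_S wedge e_T relative to e_{S union T} (S, T disjoint).\<close>
definition wsign :: "nat set \<Rightarrow> nat set \<Rightarrow> 'a::field" where
  "wsign S T = (-1) ^ card {(s, t). s \<in> S \<and> t \<in> T \<and> t < s}"

definition wedge :: "'a::field ext \<Rightarrow> 'a ext \<Rightarrow> 'a ext" where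
  "wedge x y = (\<lambda>U. \<Sum>S\<in>Pow U. wsign S (U - S) * x S * y (U - S))"

definition basis_vec :: "nat \<Rightarrow> 'a::field ext" where
  "basis_vec i = (\<lambda>S. if S = {i} then 1 else 0)"

definition is_subsp :: "'a::field ext set \<Rightarrow> bool" where
  "is_subsp W \<longleftrightarrow> vzero \<in> W \<and> (\<forall>x\<in>W. \<forall>y\<in>W. vadd x y \<in> W) \<and>
     (\<forall>c. \<forall>x\<in>W. vscale c x \<in> W)"

definition lspan :: "'a::field ext set \<Rightarrow> 'a ext set" where
  "lspan A = \<Inter>{W. is_subsp W \<and> A \<subseteq> W}"

definition decomp :: "nat \<Rightarrow> nat \<Rightarrow> nat \<Rightarrow> 'a::field ext \<Rightarrow> 'a ext \<times> 'a ext" where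
  "decomp n k j m = (THE p. fst p \<in> Extkj n k j \<and> snd p \<in> Extkj n (k - 1) j \<and>
       m = vadd (fst p) (wedge (basis_vec j) (snd p)))"

definition slow_shift :: "nat \<Rightarrow> nat \<Rightarrow> nat \<Rightarrow> nat \<Rightarrow> 'a::field ext \<Rightarrow> 'a ext" where
  "slow_shift n k j i m = (let (x', y') = decomp n k j m;
       z = vadd x' (wedge (basis_vec i) y')
     in if z \<noteq> vzero then z else wedge (basis_vec j) y')"

definition slow_shift_sp :: "nat \<Rightarrow> nat \<Rightarrow> nat \<Rightarrow> nat \<Rightarrow> 'a::field ext set \<Rightarrow> 'a ext set" where
  "slow_shift_sp n k j i L = lspan {slow_shift n k j i m | m. m \<in> L \<and> m \<noteq> vzero}"

end

theory Submission
  imports Defs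
begin

text \<open>Write \<open>N\<close> for \<open>N_{j->i}\<close> and let \<open>P\<close> keep the coefficients of those \<open>e_S\<close>
  with \<open>j \<in> S\<close>. By monomiality every \<open>m \<in> L\<close> is \<open>a + e_j \<wedge> y\<close> with both summands in \<open>L\<close>,
  and \<open>N m\<close> is either \<open>a + e_i \<wedge> y\<close>, which \<open>P\<close> kills, or \<open>e_j \<wedge> y\<close>, which \<open>P\<close> fixes; so
  the subspace \<open>P\<^sup>-\<^sup>1 L\<close> contains every generator of \<open>N L\<close>, hence \<open>N L\<close> itself. Thus
  \<open>e_j \<wedge> x \<in> N L\<close> gives \<open>e_j \<wedge> x = P (e_j \<wedge> x) \<in> L\<close>, and then \<open>e_i \<wedge> x = N (e_j \<wedge> x)\<close>
  unless it is zero. Neither the characteristic nor \<open>i < j\<close> matters beyond \<open>i \<noteq> j\<close>.\<close>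

lemma wsign_nonzero: "wsign S T \<noteq> (0::'a::field)"
  unfolding wsign_def by simp

lemma wedge_basis_vec_apply:
  "wedge (basis_vec j) y U =
     (if finite U \<and> j \<in> U then wsign {j} (U - {j}) * y (U - {j}) else (0::'a::field))"
proof (cases "finite U")
  case True
  have "wedge (basis_vec j) y U =
      (\<Sum>S\<in>Pow U. if S = {j} then wsign S (U - S) * y (U - S) else 0)"
    unfolding wedge_def basis_vec_def by (rule sum.cong) auto
  also have "\<dots> = (if {j} \<in> Pow U then wsign {j} (U - {j}) * y (U - {j}) else 0)"
    using True by (subst sum.delta) auto
  finally show ?thesis using True by auto
next
  case False
  then show ?thesis unfolding wedge_def by simp
qed

lemma wedge_vzero: "wedge x (vzero :: 'a::field ext) = vzero"
  unfolding wedge_def vzero_def by simp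

lemma Extkj_support: "y \<in> Extkj n k j \<Longrightarrow> y S \<noteq> 0 \<Longrightarrow> finite S \<and> j \<notin> S"
  unfolding Extkj_def Extk_def Ext_def by (auto intro: finite_subset)

lemma vzero_in_Extkj: "vzero \<in> Extkj n k j"
  unfolding Extkj_def Extk_def Ext_def vzero_def by simp

lemma inj_on_wedge_basis_vec:
  "inj_on (wedge (basis_vec j)) (Extkj n k j :: 'a::field ext set)"
proof (rule inj_onI, rule ext)
  fix y y' :: "'a ext" and S
  assume y: "y \<in> Extkj n k j" and y': "y' \<in> Extkj n k j"
    and eq: "wedge (basis_vec j) y = wedge (basis_vec j) y'"
  show "y S = y' S"
  proof (cases "finite S \<and> j \<notin> S")
    case True
    have "wedge (basis_vec j) y (insert j S) = wedge (basis_vec j) y' (insert j S)"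
      using eq by simp
    with True show ?thesis by (simp add: wedge_basis_vec_apply wsign_nonzero)
  next
    case False
    then have "y S = 0" "y' S = 0"
      using Extkj_support[OF y, of S] Extkj_support[OF y', of S] by blast+
    then show ?thesis by simp
  qed
qed

lemma decomp_vadd_wedge_basis_vec:
  assumes a: "a \<in> Extkj n k j" and y: "y \<in> Extkj n (k - 1) j"
  shows "decomp n k j (vadd a (wedge (basis_vec j) y)) = ((a, y) :: 'a::field ext \<times> 'a ext)"
  unfolding decomp_def
proof (rule the_equality)
  show "fst (a, y) \<in> Extkj n k j \<and> snd (a, y) \<in> Extkj n (k - 1) j \<and>
      vadd a (wedge (basis_vec j) y) = vadd (fst (a, y)) (wedge (basis_vec j) (snd (a, y)))"
    using a y by simp
next
  fix p :: "'a ext \<times> 'a ext"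
  assume p: "fst p \<in> Extkj n k j \<and> snd p \<in> Extkj n (k - 1) j \<and>
      vadd a (wedge (basis_vec j) y) = vadd (fst p) (wedge (basis_vec j) (snd p))"
  then have coeff: "a S + wedge (basis_vec j) y S = fst p S + wedge (basis_vec j) (snd p) S"
    for S unfolding vadd_def by metis
  have "fst p = a"
  proof
    fix S
    show "fst p S = a S"
    proof (cases "j \<in> S")
      case True
      then have "a S = 0" "fst p S = 0"
        using Extkj_support[OF a, of S] Extkj_support[of "fst p" n k j S] p by blast+
      then show ?thesis by simp
    next
      case False
      then show ?thesis using coeff[of S] by (simp add: wedge_basis_vec_apply)
    qed
  qed
  moreover have "snd p = y"
  proof -
    have "wedge (basis_vec j) (snd p) = wedge (basis_vec j) y"
      using coeff \<open>fst p = a\<close> by auto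
    then show ?thesis using inj_on_wedge_basis_vec[THEN inj_onD] p y by blast
  qed
  ultimately show "p = (a, y)" by (cases p) simp
qed

lemma slow_shift_vadd_wedge_basis_vec:
  assumes "a \<in> Extkj n k j" and "y \<in> Extkj n (k - 1) j"
  shows "slow_shift n k j i (vadd a (wedge (basis_vec j) y)) =
    (let z = vadd a (wedge (basis_vec i) y)
     in if z \<noteq> vzero then z else wedge (basis_vec j) (y :: 'a::field ext))"
  unfolding slow_shift_def decomp_vadd_wedge_basis_vec[OF assms] by simp

lemma slow_shift_wedge_basis_vec:
  assumes "x \<in> Extkj n (k - 1) j"
  shows "slow_shift n k j i (wedge (basis_vec j) x) =
    (if wedge (basis_vec i) x \<noteq> vzero then wedge (basis_vec i) x
     else wedge (basis_vec j) (x :: 'a::field ext))"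
proof -
  have "vadd vzero z = z" for z :: "'a ext"
    unfolding vadd_def vzero_def by simp
  then show ?thesis
    using slow_shift_vadd_wedge_basis_vec[OF vzero_in_Extkj assms] by simp
qed

lemma lspan_least: "is_subsp W \<Longrightarrow> A \<subseteq> W \<Longrightarrow> lspan A \<subseteq> W"
  unfolding lspan_def by blast

lemma lspan_superset: "A \<subseteq> lspan A"
  unfolding lspan_def by blast

lemma vzero_in_lspan: "vzero \<in> lspan A"
  unfolding lspan_def is_subsp_def by blast

lemma is_subsp_vimage:
  assumes "is_subsp L"
    and "f vzero = vzero"
    and "\<And>x y. f (vadd x y) = vadd (f x) (f y)"
    and "\<And>c x. f (vscale c x) = vscale c (f x)"
  shows "is_subsp (f -` L)"
  using assms unfolding is_subsp_def by simp

definition ej_part :: "nat \<Rightarrow> 'a::field ext \<Rightarrow> 'a ext" where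
  "ej_part j z = (\<lambda>S. if j \<in> S then z S else 0)"

lemma is_subsp_vimage_ej_part: "is_subsp L \<Longrightarrow> is_subsp (ej_part j -` L)"
  by (rule is_subsp_vimage) (auto simp: ej_part_def vzero_def vadd_def vscale_def)

lemma ej_part_wedge_basis_vec: "ej_part j (wedge (basis_vec j) y) = wedge (basis_vec j) y"
  unfolding ej_part_def by (auto simp: wedge_basis_vec_apply)

lemma ej_part_Extkj: "a \<in> Extkj n k j \<Longrightarrow> ej_part j a = vzero"
  unfolding ej_part_def vzero_def fun_eq_iff using Extkj_support[of a n k j] by auto

lemma ej_part_wedge_other_basis_vec:
  assumes "i \<noteq> j" and "y \<in> Extkj n k j"
  shows "ej_part j (wedge (basis_vec i) y) = vzero"
  unfolding ej_part_def vzero_def fun_eq_iff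
  using assms Extkj_support[OF assms(2), of "S - {i}" for S]
  by (auto simp: wedge_basis_vec_apply)

definition monomial_wrt :: "nat \<Rightarrow> nat \<Rightarrow> nat \<Rightarrow> 'a::field ext set \<Rightarrow> bool" where
  "monomial_wrt n k j L \<longleftrightarrow> L = {vadd a b | a b. a \<in> L \<inter> Extkj n k j \<and>
      b \<in> L \<inter> {wedge (basis_vec j) y | y. y \<in> Extkj n (k - 1) j}}"

lemma ej_part_slow_shift_in:
  assumes L: "is_subsp L" "monomial_wrt n k j L" and "i \<noteq> j" and "m \<in> L"
  shows "ej_part j (slow_shift n k j i m) \<in> L"
proof -
  obtain a y where a: "a \<in> Extkj n k j" and y: "y \<in> Extkj n (k - 1) j"
    and jy_L: "wedge (basis_vec j) y \<in> L" and m: "m = vadd a (wedge (basis_vec j) y)"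
    using \<open>m \<in> L\<close> L(2) unfolding monomial_wrt_def by blast
  have "ej_part j (vadd a (wedge (basis_vec i) y)) = vzero"
    using ej_part_Extkj[OF a] ej_part_wedge_other_basis_vec[OF \<open>i \<noteq> j\<close> y]
    by (simp add: ej_part_def vadd_def vzero_def fun_eq_iff split: if_splits)
  moreover have "vzero \<in> L" using L(1) unfolding is_subsp_def by blast
  ultimately show ?thesis
    using jy_L
    by (simp add: m slow_shift_vadd_wedge_basis_vec[OF a y] ej_part_wedge_basis_vec Let_def)
qed

lemma ej_part_slow_shift_sp_subset:
  assumes "is_subsp L" "monomial_wrt n k j L" and "i \<noteq> j"
  shows "ej_part j ` slow_shift_sp n k j i L \<subseteq> L"
proof -
  have "slow_shift_sp n k j i L \<subseteq> ej_part j -` L"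
    unfolding slow_shift_sp_def
    using assms by (intro lspan_least is_subsp_vimage_ej_part) (auto intro: ej_part_slow_shift_in)
  then show ?thesis by blast
qed

lemma wedge_other_basis_vec_in_slow_shift_sp:
  assumes x: "x \<in> Extkj n (k - 1) j" and jx_L: "wedge (basis_vec j) x \<in> L"
  shows "wedge (basis_vec i) x \<in> slow_shift_sp n k j i (L :: 'a::field ext set)"
proof (cases "wedge (basis_vec i) x = vzero")
  case True
  then show ?thesis unfolding slow_shift_sp_def by (simp add: vzero_in_lspan)
next
  case False
  then have "x \<noteq> vzero" by (auto simp: wedge_vzero)
  then have "wedge (basis_vec j) x \<noteq> vzero"
    using inj_on_wedge_basis_vec[THEN inj_onD, OF _ x vzero_in_Extkj] by (auto simp: wedge_vzero)
  moreover have "slow_shift n k j i (wedge (basis_vec j) x) = wedge (basis_vec i) x"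
    using False by (simp add: slow_shift_wedge_basis_vec[OF x])
  ultimately show ?thesis
    using jx_L unfolding slow_shift_sp_def by (intro lspan_superset[THEN subsetD]) force
qed

theorem corollary3p6:
  fixes L :: "'a::field ext set" and n k i j :: nat
  assumes char: "(2::'a) \<noteq> 0"
    and subsp: "is_subsp L" and LsubExt: "L \<subseteq> Extk n k"
    and ij: "1 \<le> i" "i < j" "j \<le> n"
    and monomial: "L = {vadd a b | a b. a \<in> L \<inter> Extkj n k j \<and>
        b \<in> L \<inter> {wedge (basis_vec j) y | y. y \<in> Extkj n (k - 1) j}}"
  shows "\<forall>x \<in> Extkj n (k - 1) j.
           wedge (basis_vec j) x \<in> slow_shift_sp n k j i L \<longrightarrow>
           wedge (basis_vec i) x \<in> slow_shift_sp n k j i L"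
proof (intro ballI impI)
  fix x assume x: "x \<in> Extkj n (k - 1) j"
    and jx_N: "wedge (basis_vec j) x \<in> slow_shift_sp n k j i L"
  have "monomial_wrt n k j L" using monomial unfolding monomial_wrt_def .
  moreover have "i \<noteq> j" using ij by simp
  ultimately have "ej_part j (wedge (basis_vec j) x) \<in> L"
    using ej_part_slow_shift_sp_subset[OF subsp] jx_N by (meson image_subset_iff)
  then have "wedge (basis_vec j) x \<in> L" by (simp add: ej_part_wedge_basis_vec)
  then show "wedge (basis_vec i) x \<in> slow_shift_sp n k j i L"
    using wedge_other_basis_vec_in_slow_shift_sp[OF x] by blast
qed

end
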